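(* The $C$-shaped supergrid graph $C(m,n;k,l;c,d)$ contains a Hamiltonian cycle if and only if neither $a=m-k=1$ nor there exists a vertex $w$ of $C(m,n;k,l;c,d)$ with $\deg(w)=1$.
   Context: A supergrid graph is a finite vertex-induced subgraph of the infinite graph on integer points of the plane in which two vertices are adjacent iff their x- and y-coordinates each differ by at most 1. $R(m,n)$ denotes the rectangular supergrid graph on vertices $(x,y)$ with $1\le x\le m$, $1\le y\le n$. The $C$-shaped supergrid graph $C(m,n;k,l;c,d)$ is obtained from $R(m,n)$ by removing a subgraph $R(k,l)$ starting at the node $(m,c+1)$, such that $R(m,n)$ and $R(k,l)$ share exactly one border side, where $m\ge 2$, $n\ge 3$, $k,l\ge 1$, $c\ge 1$, $d=n-l-c\ge 1$, and $a=m-k\ge 1$. *)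

theory Defs
  imports Main
begin

type_synonym vert = "int \<times> int"

definition sg_adj :: "vert \<Rightarrow> vert \<Rightarrow> bool" where
  "sg_adj u v \<longleftrightarrow> u \<noteq> v \<and> \<bar>fst u - fst v\<bar> \<le> 1 \<and> \<bar>snd u - snd v\<bar> \<le> 1"

definition rect_sg :: "nat \<Rightarrow> nat \<Rightarrow> vert set" where
  "rect_sg m n = {(x, y). 1 \<le> x \<and> x \<le> int m \<and> 1 \<le> y \<and> y \<le> int n}"

text \<open>Vertex set of C(m,n;k,l;c,d): R(m,n) with the k x l rectangle starting at
node (m, c+1) removed (columns m-k+1..m, rows c+1..c+l); d = n-l-c rows remain
on the other side.  The parameter d is determined by the others.\<close>
definition C_sg :: "nat \<Rightarrow> nat \<Rightarrow> nat \<Rightarrow> nat \<Rightarrow> nat \<Rightarrow> nat \<Rightarrow> vert set" where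
  "C_sg m n k l c d = rect_sg m n -
     {(x, y). int m - int k + 1 \<le> x \<and> x \<le> int m \<and> int c + 1 \<le> y \<and> y \<le> int c + int l}"

definition sg_deg :: "vert set \<Rightarrow> vert \<Rightarrow> nat" where
  "sg_deg V v = card {u \<in> V. sg_adj v u}"

definition sg_hamiltonian_cycle :: "vert set \<Rightarrow> bool" where
  "sg_hamiltonian_cycle V \<longleftrightarrow>
     (\<exists>vs. distinct vs \<and> set vs = V \<and> length vs \<ge> 3 \<and>
        (\<forall>i. Suc i < length vs \<longrightarrow> sg_adj (vs ! i) (vs ! Suc i)) \<and>
        sg_adj (last vs) (hd vs))"

end

theory Submission
  imports Defs
begin

(* For a = 1 the vertex (1, c+1) is a cut vertex: it separates the rows below the removed
   rectangle from those above it. Deleting a vertex from a Hamiltonian cycle leaves a Hamiltonian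
   path through all the other vertices, so a graph with a cut vertex, or with a vertex of degree 1,
   has no Hamiltonian cycle.
   Conversely, for a >= 2 the cycle is glued from Hamiltonian paths of rectangles: start at the top
   of column a, sweep the upper arm, run down column a beside the removed rectangle, sweep the
   lower arm back to (a, 1), and return upwards through columns 1..a-1. If k >= 2, the corners
   (m, 1) and (m, n) have degree 1 unless both arms have at least two rows, and then each arm can
   be swept from column a back to column a; if k = 1, an arm is swept diagonally to column a + 1,
   from where a diagonal edge leads back to column a. *)

definition sg_ham_path :: "vert set \<Rightarrow> vert \<Rightarrow> vert \<Rightarrow> bool" where
  "sg_ham_path V s t \<longleftrightarrow>
     (\<exists>vs. vs \<noteq> [] \<and> distinct vs \<and> set vs = V \<and> hd vs = s \<and> last vs = t \<and> successively sg_adj vs)"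

lemma sg_adj_sym: "sg_adj u v \<Longrightarrow> sg_adj v u"
  unfolding sg_adj_def by auto

lemma sg_ham_path_append:
  assumes "sg_ham_path A s t" "sg_ham_path B s' t'" "A \<inter> B = {}" "sg_adj t s'"
  shows "sg_ham_path (A \<union> B) s t'"
proof -
  obtain xs where "xs \<noteq> []" "distinct xs" "set xs = A" "hd xs = s" "last xs = t" "successively sg_adj xs"
    using assms(1) unfolding sg_ham_path_def by blast
  moreover obtain ys where "ys \<noteq> []" "distinct ys" "set ys = B" "hd ys = s'" "last ys = t'"
    "successively sg_adj ys"
    using assms(2) unfolding sg_ham_path_def by blast
  ultimately show ?thesis
    unfolding sg_ham_path_def using assms(3,4)
    by (intro exI[of _ "xs @ ys"]) (auto simp: successively_append_iff)
qed

lemma sg_ham_path_rev: "sg_ham_path V s t \<Longrightarrow> sg_ham_path V t s"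
  unfolding sg_ham_path_def
  by (metis distinct_rev hd_rev last_rev rev_is_Nil_conv set_rev successively_mono
      successively_rev sg_adj_sym)

lemma sg_ham_path_image:
  assumes "sg_ham_path V s t" "inj_on f V" "\<And>u v. sg_adj u v \<Longrightarrow> sg_adj (f u) (f v)"
  shows "sg_ham_path (f ` V) (f s) (f t)"
proof -
  obtain vs where "vs \<noteq> []" "distinct vs" "set vs = V" "hd vs = s" "last vs = t" "successively sg_adj vs"
    using assms(1) unfolding sg_ham_path_def by blast
  with assms(2,3) show ?thesis
    unfolding sg_ham_path_def
    by (intro exI[of _ "map f vs"])
       (auto simp: distinct_map hd_map last_map successively_map intro: successively_mono)
qed

lemma successively_upto: "successively (\<lambda>a b. b = a + 1) [i..j]"
proof (induction i j rule: upto.induct)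
  case (1 i j)
  then show ?case
    by (cases "i < j"; cases "i = j")
       (auto simp: upto_rec1[of i j] upto_rec1[of "i + 1" j] successively_Cons)
qed

lemma sg_ham_path_line:
  fixes i j :: int
  assumes "i \<le> j" "inj f" "\<And>a. sg_adj (f a) (f (a + 1))"
  shows "sg_ham_path (f ` {i..j}) (f i) (f j)"
proof -
  have "hd [i..j] = i" "last [i..j] = j"
    by (subst upto_rec1[OF assms(1)], simp) (subst upto_rec2[OF assms(1)], simp)
  with assms show ?thesis
    unfolding sg_ham_path_def
    by (intro exI[of _ "map f [i..j]"])
       (auto simp: distinct_map hd_map last_map successively_map inj_on_subset[OF assms(2)]
         intro: successively_mono[OF successively_upto])
qed

lemma sg_ham_path_row:
  assumes "x1 \<le> x2"
  shows "sg_ham_path ({x1..x2} \<times> {y}) (x1, y) (x2, y)"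
proof -
  have "{x1..x2} \<times> {y} = (\<lambda>x. (x, y)) ` {x1..x2}" by auto
  with sg_ham_path_line[OF assms, of "\<lambda>x. (x, y)"] show ?thesis by (simp add: inj_def sg_adj_def)
qed

lemma sg_ham_path_column:
  assumes "y1 \<le> y2"
  shows "sg_ham_path ({x} \<times> {y1..y2}) (x, y1) (x, y2)"
proof -
  have "{x} \<times> {y1..y2} = Pair x ` {y1..y2}" by auto
  with sg_ham_path_line[OF assms, of "Pair x"] show ?thesis by (simp add: inj_def sg_adj_def)
qed

lemma sg_ham_path_two_rows:
  "x1 \<le> x2 \<Longrightarrow> sg_ham_path ({x1..x2} \<times> {y..y + 1}) (x1, y) (x2, y + 1)"
proof (induction x2 rule: int_ge_induct)
  case base
  then show ?case using sg_ham_path_column[of y "y + 1" x1] by simp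
next
  case (step x)
  have "sg_ham_path ({x1..x} \<times> {y..y + 1} \<union> {x + 1} \<times> {y..y + 1}) (x1, y) (x + 1, y + 1)"
    by (rule sg_ham_path_append[OF step.IH sg_ham_path_column]) (auto simp: sg_adj_def)
  moreover have "{x1..x} \<times> {y..y + 1} \<union> {x + 1} \<times> {y..y + 1} = {x1..x + 1} \<times> {y..y + 1}"
    using step.hyps by auto
  ultimately show ?case by simp
qed

lemma sg_ham_path_box_diagonal:
  assumes "x1 \<le> x2" "y1 \<le> y2"
  shows "sg_ham_path ({x1..x2} \<times> {y1..y2}) (x1, y1) (x2, y2)"
  using assms(2)
proof (induction "nat (y2 - y1)" arbitrary: y1 rule: less_induct)
  case less
  consider (one_row) "y2 = y1" | (two_rows) "y2 = y1 + 1" | (taller) "y1 + 2 \<le> y2"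
    using less.prems by linarith
  then show ?case
  proof cases
    case one_row
    then show ?thesis using sg_ham_path_row[OF assms(1)] by simp
  next
    case two_rows
    then show ?thesis using sg_ham_path_two_rows[OF assms(1)] by simp
  next
    case taller
    have "sg_ham_path ({x1..x2} \<times> {y1} \<union> {x1..x2} \<times> {y1 + 1}) (x1, y1) (x1, y1 + 1)"
      by (rule sg_ham_path_append[OF sg_ham_path_row sg_ham_path_rev[OF sg_ham_path_row]])
         (use assms(1) in \<open>auto simp: sg_adj_def\<close>)
    then have "sg_ham_path ({x1..x2} \<times> {y1} \<union> {x1..x2} \<times> {y1 + 1} \<union> {x1..x2} \<times> {y1 + 2..y2})
        (x1, y1) (x2, y2)"
      by (rule sg_ham_path_append[OF _ less.hyps]) (use taller in \<open>auto simp: sg_adj_def\<close>)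
    moreover have "{x1..x2} \<times> {y1} \<union> {x1..x2} \<times> {y1 + 1} \<union> {x1..x2} \<times> {y1 + 2..y2} =
        {x1..x2} \<times> {y1..y2}"
      using taller by auto
    ultimately show ?thesis by simp
  qed
qed

lemma sg_ham_path_box_mirror:
  assumes "sg_ham_path ({x1..x2} \<times> Y) (x, y) (x', y')"
  shows "sg_ham_path ({x1..x2} \<times> Y) (x1 + x2 - x, y) (x1 + x2 - x', y')"
proof -
  define f where "f = (\<lambda>(x, y). (x1 + x2 - x, y :: int))"
  have involution: "f (f p) = p" for p
    by (auto simp: f_def split: prod.splits)
  have into: "f ` ({x1..x2} \<times> Y) \<subseteq> {x1..x2} \<times> Y"
    by (auto simp: f_def)
  then have "f ` ({x1..x2} \<times> Y) = {x1..x2} \<times> Y"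
    by (metis involution image_eqI image_subset_iff subset_antisym subsetI)
  moreover have "sg_ham_path (f ` ({x1..x2} \<times> Y)) (f (x, y)) (f (x', y'))"
    by (rule sg_ham_path_image[OF assms]) (auto simp: f_def inj_on_def sg_adj_def)
  ultimately show ?thesis by (simp add: f_def)
qed

lemma sg_ham_path_box_antidiagonal:
  "x1 \<le> x2 \<Longrightarrow> y1 \<le> y2 \<Longrightarrow> sg_ham_path ({x1..x2} \<times> {y1..y2}) (x2, y1) (x1, y2)"
  using sg_ham_path_box_mirror[OF sg_ham_path_box_diagonal] by fastforce

lemma sg_ham_path_box_left_side:
  assumes "x1 \<le> x2" "y1 < y2"
  shows "sg_ham_path ({x1..x2} \<times> {y1..y2}) (x1, y1) (x1, y2)"
proof -
  have "sg_ham_path ({x1..x2} \<times> {y1} \<union> {x1..x2} \<times> {y1 + 1..y2}) (x1, y1) (x1, y2)"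
    by (rule sg_ham_path_append[OF sg_ham_path_row sg_ham_path_box_antidiagonal])
       (use assms in \<open>auto simp: sg_adj_def\<close>)
  moreover have "{x1..x2} \<times> {y1} \<union> {x1..x2} \<times> {y1 + 1..y2} = {x1..x2} \<times> {y1..y2}"
    using assms by auto
  ultimately show ?thesis by simp
qed

lemma sg_ham_path_box_right_side:
  "x1 \<le> x2 \<Longrightarrow> y1 < y2 \<Longrightarrow> sg_ham_path ({x1..x2} \<times> {y1..y2}) (x2, y1) (x2, y2)"
  using sg_ham_path_box_mirror[OF sg_ham_path_box_left_side] by fastforce

lemma sg_hamiltonian_cycle_close:
  assumes "sg_ham_path V s t" "sg_adj t s" "r \<in> V - {s, t}"
  shows "sg_hamiltonian_cycle V"
proof -
  obtain vs where vs: "vs \<noteq> []" "distinct vs" "set vs = V" "hd vs = s" "last vs = t"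
    "successively sg_adj vs"
    using assms(1) unfolding sg_ham_path_def by blast
  have "s \<noteq> t" using assms(2) unfolding sg_adj_def by auto
  then have "3 = card {s, t, r}" using assms(3) by auto
  also have "\<dots> \<le> card (set vs)"
    using vs(1,3,4,5) assms(3) by (intro card_mono) auto
  also have "\<dots> = length vs" using vs(2) by (rule distinct_card)
  finally show ?thesis
    unfolding sg_hamiltonian_cycle_def using vs assms(2) by (auto simp: successively_conv_nth)
qed

lemma sg_ham_path_arm:
  assumes "x1 < x2" "y1 \<le> y2" "x1 + 1 < x2 \<Longrightarrow> y1 < y2"
  shows "\<exists>t. sg_ham_path ({x1..x2} \<times> {y1..y2}) (x1, y2) t \<and> sg_adj t (x1, y1 - 1)"
    and "\<exists>s. sg_ham_path ({x1..x2} \<times> {y1..y2}) s (x1, y1) \<and> sg_adj (x1, y2 + 1) s"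
proof -
  consider (wide) "x1 + 1 < x2" "y1 < y2" | (narrow) "x2 = x1 + 1" using assms by linarith
  note shape = this
  from shape show "\<exists>t. sg_ham_path ({x1..x2} \<times> {y1..y2}) (x1, y2) t \<and> sg_adj t (x1, y1 - 1)"
  proof cases
    case wide
    then show ?thesis
      by (intro exI[of _ "(x1, y1)"] conjI sg_ham_path_rev[OF sg_ham_path_box_left_side])
         (auto simp: sg_adj_def)
  next
    case narrow
    then show ?thesis
      using assms(2)
      by (intro exI[of _ "(x2, y1)"] conjI sg_ham_path_rev[OF sg_ham_path_box_antidiagonal])
         (auto simp: sg_adj_def)
  qed
  from shape show "\<exists>s. sg_ham_path ({x1..x2} \<times> {y1..y2}) s (x1, y1) \<and> sg_adj (x1, y2 + 1) s"
  proof cases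
    case wide
    then show ?thesis
      by (intro exI[of _ "(x1, y2)"] conjI sg_ham_path_rev[OF sg_ham_path_box_left_side])
         (auto simp: sg_adj_def)
  next
    case narrow
    then show ?thesis
      using assms(2)
      by (intro exI[of _ "(x2, y2)"] conjI sg_ham_path_rev[OF sg_ham_path_box_diagonal])
         (auto simp: sg_adj_def)
  qed
qed

lemma sg_hamiltonian_cycle_C_shape:
  fixes a M C H N :: int
  assumes "2 \<le> a" "a < M" "1 \<le> C" "1 \<le> H" "C + H < N"
    and "a + 1 < M \<Longrightarrow> 1 < C \<and> C + H + 1 < N"
  shows "sg_hamiltonian_cycle ({a..M} \<times> {C + H + 1..N} \<union> {a} \<times> {C + 1..C + H} \<union>
           {a..M} \<times> {1..C} \<union> {1..a - 1} \<times> {1..N})"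
proof -
  obtain t where top: "sg_ham_path ({a..M} \<times> {C + H + 1..N}) (a, N) t" "sg_adj t (a, C + H)"
    using sg_ham_path_arm(1)[of a M "C + H + 1" N] assms by auto
  obtain s where bottom: "sg_ham_path ({a..M} \<times> {1..C}) s (a, 1)" "sg_adj (a, C + 1) s"
    using sg_ham_path_arm(2)[of a M 1 C] assms by auto
  have "sg_ham_path ({a..M} \<times> {C + H + 1..N} \<union> {a} \<times> {C + 1..C + H}) (a, N) (a, C + 1)"
    by (rule sg_ham_path_append[OF top(1) sg_ham_path_rev[OF sg_ham_path_column]])
       (use top(2) assms in auto)
  then have "sg_ham_path ({a..M} \<times> {C + H + 1..N} \<union> {a} \<times> {C + 1..C + H} \<union>
      {a..M} \<times> {1..C}) (a, N) (a, 1)"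
    by (rule sg_ham_path_append[OF _ bottom(1)]) (use bottom(2) assms in auto)
  then have "sg_ham_path ({a..M} \<times> {C + H + 1..N} \<union> {a} \<times> {C + 1..C + H} \<union>
      {a..M} \<times> {1..C} \<union> {1..a - 1} \<times> {1..N}) (a, N) (a - 1, N)"
    by (rule sg_ham_path_append[OF _ sg_ham_path_box_right_side])
       (use assms in \<open>auto simp: sg_adj_def\<close>)
  then show ?thesis
    by (rule sg_hamiltonian_cycle_close[where r = "(a, 1)"]) (use assms in \<open>auto simp: sg_adj_def\<close>)
qed

lemma C_sg_eq_union:
  assumes "k < m" "c + l \<le> n"
  shows "C_sg m n k l c d =
    {int m - int k..int m} \<times> {int c + int l + 1..int n} \<union> {int m - int k} \<times> {int c + 1..int c + int l} \<union>
    {int m - int k..int m} \<times> {1..int c} \<union> {1..int m - int k - 1} \<times> {1..int n}"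
  using assms unfolding C_sg_def rect_sg_def by auto

lemma sg_hamiltonian_cycle_C_sg:
  assumes "2 \<le> m - k" "1 \<le> k" "1 \<le> l" "1 \<le> c" "1 \<le> d" "n = c + l + d"
    and "2 \<le> k \<Longrightarrow> 2 \<le> c \<and> 2 \<le> d"
  shows "sg_hamiltonian_cycle (C_sg m n k l c d)"
proof -
  have "sg_hamiltonian_cycle
      ({int m - int k..int m} \<times> {int c + int l + 1..int n} \<union> {int m - int k} \<times> {int c + 1..int c + int l} \<union>
       {int m - int k..int m} \<times> {1..int c} \<union> {1..int m - int k - 1} \<times> {1..int n})"
    by (rule sg_hamiltonian_cycle_C_shape) (use assms in auto)
  then show ?thesis
    using C_sg_eq_union[of k m c l n d] assms(1,6) by simp
qed

lemma successively_rotate: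
  assumes "successively R (xs @ v # ys)" "R (last (xs @ v # ys)) (hd (xs @ v # ys))"
  shows "successively R (v # ys @ xs) \<and> R (last (v # ys @ xs)) v"
proof (cases "xs = []")
  case True
  with assms show ?thesis by simp
next
  case False
  have "successively R (v # ys)" "successively R xs" "R (last xs) v"
    using assms(1) False by (simp_all add: successively_append_iff)
  moreover have "R (last (v # ys)) (hd xs)" using assms(2) False by simp
  ultimately show ?thesis
    using False successively_append_iff[of R "v # ys" xs] by auto
qed

lemma successively_eq_imp_eq_hd:
  "successively (\<lambda>x y. f x = f y) xs \<Longrightarrow> x \<in> set xs \<Longrightarrow> f x = f (hd xs)"
  by (induction xs rule: induct_list012) auto

lemma sg_hamiltonian_cycle_from:
  assumes "sg_hamiltonian_cycle V" "v \<in> V"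
  obtains ws where "distinct (v # ws)" "set (v # ws) = V" "2 \<le> length ws"
    "successively sg_adj (v # ws)" "sg_adj (last ws) v"
proof -
  obtain vs where vs: "distinct vs" "set vs = V" "3 \<le> length vs" "successively sg_adj vs"
    "sg_adj (last vs) (hd vs)"
    using assms(1) unfolding sg_hamiltonian_cycle_def successively_conv_nth by blast
  then obtain xs ys where vs_split: "vs = xs @ v # ys"
    using assms(2) by (metis split_list)
  have "successively sg_adj (v # ys @ xs)" "sg_adj (last (v # ys @ xs)) v"
    using successively_rotate[of sg_adj xs v ys] vs(4,5) unfolding vs_split by simp_all
  moreover have "2 \<le> length (ys @ xs)" using vs(3) unfolding vs_split by simp
  ultimately show thesis
    using vs(1,2) unfolding vs_split by (intro that[of "ys @ xs"]) (auto split: if_splits)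
qed

lemma sg_hamiltonian_cycle_deg:
  assumes "sg_hamiltonian_cycle V" "finite V" "v \<in> V"
  shows "2 \<le> sg_deg V v"
proof -
  obtain ws where ws: "distinct (v # ws)" "set (v # ws) = V" "2 \<le> length ws"
    "successively sg_adj (v # ws)" "sg_adj (last ws) v"
    using sg_hamiltonian_cycle_from[OF assms(1,3)] .
  then obtain x y zs where ws_eq: "ws = x # y # zs"
    by (metis One_nat_def Suc_1 Suc_le_length_iff)
  have "x \<noteq> last ws"
    using ws(1) unfolding ws_eq by (metis distinct.simps(2) last_in_set last.simps list.discI)
  then have "2 = card {x, last ws}" by simp
  also have "\<dots> \<le> sg_deg V v"
    unfolding sg_deg_def using ws assms(2) unfolding ws_eq
    by (intro card_mono) (auto intro: sg_adj_sym)
  finally show ?thesis .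
qed

lemma sg_hamiltonian_cycle_no_cut_vertex:
  assumes "sg_hamiltonian_cycle V" "v \<in> V"
    and "\<And>u w. u \<in> V - {v} \<Longrightarrow> w \<in> V - {v} \<Longrightarrow> sg_adj u w \<Longrightarrow> P u = P w"
    and "p \<in> V - {v}" "q \<in> V - {v}"
  shows "P p = P q"
proof -
  obtain ws where ws: "distinct (v # ws)" "set (v # ws) = V" "successively sg_adj (v # ws)"
    using sg_hamiltonian_cycle_from[OF assms(1,2)] by metis
  then have ws_set: "set ws = V - {v}" by auto
  have "successively sg_adj ws" using ws(3) by (auto simp: successively_Cons)
  then have "successively (\<lambda>u w. P u = P w) ws"
    by (rule successively_mono) (use assms(3) ws_set in auto)
  then show ?thesis
    using assms(4,5) ws_set by (metis successively_eq_imp_eq_hd)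
qed

lemma finite_C_sg: "finite (C_sg m n k l c d)"
proof -
  have "C_sg m n k l c d \<subseteq> {1..int m} \<times> {1..int n}"
    unfolding C_sg_def rect_sg_def by auto
  then show ?thesis by (rule finite_subset) simp
qed

lemma sg_deg_C_sg_lower_corner:
  assumes "2 \<le> k" "k < m" "1 \<le> l" "1 \<le> n"
  shows "(int m, 1) \<in> C_sg m n k l 1 d" "sg_deg (C_sg m n k l 1 d) (int m, 1) = 1"
proof -
  have "{u \<in> C_sg m n k l 1 d. sg_adj (int m, 1) u} = {(int m - 1, 1)}"
    using assms unfolding C_sg_def rect_sg_def sg_adj_def by auto
  then show "(int m, 1) \<in> C_sg m n k l 1 d" "sg_deg (C_sg m n k l 1 d) (int m, 1) = 1"
    using assms unfolding sg_deg_def C_sg_def rect_sg_def by auto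
qed

lemma sg_deg_C_sg_upper_corner:
  assumes "2 \<le> k" "k < m" "1 \<le> l" "n = c + l + 1"
  shows "(int m, int n) \<in> C_sg m n k l c d" "sg_deg (C_sg m n k l c d) (int m, int n) = 1"
proof -
  have "{u \<in> C_sg m n k l c d. sg_adj (int m, int n) u} = {(int m - 1, int n)}"
    using assms unfolding C_sg_def rect_sg_def sg_adj_def by auto
  then show "(int m, int n) \<in> C_sg m n k l c d" "sg_deg (C_sg m n k l c d) (int m, int n) = 1"
    using assms unfolding sg_deg_def C_sg_def rect_sg_def by auto
qed

lemma C_sg_arms_wide:
  assumes "\<forall>w \<in> C_sg m n k l c d. sg_deg (C_sg m n k l c d) w \<noteq> 1"
    and "2 \<le> k" "k < m" "1 \<le> l" "1 \<le> c" "1 \<le> d" "n = c + l + d"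
  shows "2 \<le> c \<and> 2 \<le> d"
proof -
  have "c \<noteq> 1" using sg_deg_C_sg_lower_corner[of k m l n d] assms by auto
  moreover have "d \<noteq> 1" using sg_deg_C_sg_upper_corner[of k m l n c d] assms by auto
  ultimately show ?thesis using assms(5,6) by linarith
qed

lemma not_sg_hamiltonian_cycle_C_sg_width_1:
  assumes "m - k = 1" "1 \<le> l" "1 \<le> c" "c + l < n"
  shows "\<not> sg_hamiltonian_cycle (C_sg m n k l c d)"
proof
  assume hc: "sg_hamiltonian_cycle (C_sg m n k l c d)"
  define V where "V = C_sg m n k l c d"
  have mem: "(x, y) \<in> V \<longleftrightarrow> 1 \<le> x \<and> x \<le> int m \<and> 1 \<le> y \<and> y \<le> int n \<and>
      \<not> (2 \<le> x \<and> int c + 1 \<le> y \<and> y \<le> int c + int l)" for x y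
    using assms(1) unfolding V_def C_sg_def rect_sg_def by auto
  have off_row: "snd v \<noteq> int c + 1" if "v \<in> V - {(1, int c + 1)}" for v
    using that assms(2) by (cases v) (auto simp: mem)
  have "(snd (1 :: int, 1 :: int) \<le> int c) = (snd (1 :: int, int n) \<le> int c)"
  proof (rule sg_hamiltonian_cycle_no_cut_vertex[OF hc[folded V_def]])
    show "(1, int c + 1) \<in> V" "(1, 1) \<in> V - {(1, int c + 1)}" "(1, int n) \<in> V - {(1, int c + 1)}"
      using mem assms by auto
    fix u w
    assume "u \<in> V - {(1, int c + 1)}" "w \<in> V - {(1, int c + 1)}" "sg_adj u w"
    then show "(snd u \<le> int c) = (snd w \<le> int c)"
      using off_row unfolding sg_adj_def by fastforce
  qed
  then show False using assms(3,4) by simp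
qed

theorem theorem4:
  fixes m n k l c d :: nat
  assumes "m \<ge> 2" and "n \<ge> 3" and "k \<ge> 1" and "l \<ge> 1" and "c \<ge> 1"
    and "d = n - l - c" and "d \<ge> 1" and "m - k \<ge> 1"
  shows "sg_hamiltonian_cycle (C_sg m n k l c d) \<longleftrightarrow>
         \<not> (m - k = 1 \<or> (\<exists>w \<in> C_sg m n k l c d. sg_deg (C_sg m n k l c d) w = 1))"
proof
  assume hc: "sg_hamiltonian_cycle (C_sg m n k l c d)"
  have "m - k \<noteq> 1"
    using not_sg_hamiltonian_cycle_C_sg_width_1 hc assms(4,5,6,7) by fastforce
  moreover have "sg_deg (C_sg m n k l c d) w \<noteq> 1" if "w \<in> C_sg m n k l c d" for w
    using sg_hamiltonian_cycle_deg[OF hc finite_C_sg that] by simp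
  ultimately show "\<not> (m - k = 1 \<or> (\<exists>w \<in> C_sg m n k l c d. sg_deg (C_sg m n k l c d) w = 1))"
    by blast
next
  assume no_obstruction: "\<not> (m - k = 1 \<or> (\<exists>w \<in> C_sg m n k l c d. sg_deg (C_sg m n k l c d) w = 1))"
  have "k < m" "n = c + l + d" using assms(6,7,8) by simp_all
  have "2 \<le> m - k" using no_obstruction assms(8) by simp
  moreover have "2 \<le> c \<and> 2 \<le> d" if "2 \<le> k"
    using C_sg_arms_wide[of m n k l c d] no_obstruction that \<open>k < m\<close> \<open>n = c + l + d\<close> assms(4,5,7)
    by blast
  ultimately show "sg_hamiltonian_cycle (C_sg m n k l c d)"
    using sg_hamiltonian_cycle_C_sg \<open>n = c + l + d\<close> assms(3-5,7) by blast
qed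

end
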